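(* Let $\boldsymbol{x}=\boldsymbol{H}\boldsymbol{y}+\boldsymbol{n}$, where $\boldsymbol{H}$ is a fixed matrix, $\boldsymbol{y}$ is drawn from a (fictitious) prior, and $\boldsymbol{n}$ is a zero-mean random vector with covariance $\boldsymbol{\Sigma}_n$, independent of $\boldsymbol{y}$. Consider linear estimators $\hat{\boldsymbol{y}}=\boldsymbol{A}\boldsymbol{x}$ and, for $\lambda\ge 0$, the linear BCE defined (in the limit $N,M\to\infty$ of infinitely many training samples) as the minimizer over $\boldsymbol{A}$ of $$\mathrm{E}\big[\|\boldsymbol{A}\boldsymbol{x}-\boldsymbol{y}\|^2\big]+\lambda\,\mathrm{E}\Big[\big\|\mathrm{E}[\boldsymbol{A}\boldsymbol{x}-\boldsymbol{y}\mid\boldsymbol{y}]\big\|^2\Big],$$ all expectations over $\boldsymbol{y}$ being with respect to the fictitious prior. Let $\mathbf{R}=\mathrm{E}\big[\mathrm{E}[\boldsymbol{x}\mid\boldsymbol{y}]\,\mathrm{E}[\boldsymbol{x}^T\mid\boldsymbol{y}]\big]$ and $\boldsymbol{\Sigma}_{\boldsymbol{y}}=\mathrm{E}[\boldsymbol{y}\boldsymbol{y}^T]$, and assume all matrices being inverted below are invertible. Then the linear BCE is $$\boldsymbol{A}=\mathrm{E}[\boldsymbol{y}\boldsymbol{x}^T]\Big(\tfrac{1}{\lambda+1}\mathrm{E}[\boldsymbol{x}\boldsymbol{x}^T]+\tfrac{\lambda}{\lambda+1}\mathbf{R}\Big)^{-1}=\Big(\boldsymbol{H}^T\boldsymbol{\Sigma}_n^{-1}\boldsymbol{H}+\tfrac{1}{\lambda+1}\boldsymbol{\Sigma}_{\boldsymbol{y}}^{-1}\Big)^{-1}\boldsymbol{H}^T\boldsymbol{\Sigma}_n^{-1}.$$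 *)

theory Defs
  imports "HOL-Probability.Probability"
begin

definition outer :: "real^'n \<Rightarrow> real^'k \<Rightarrow> real^'k^'n" where
  "outer u v = (\<chi> i j. u $ i * v $ j)"

definition mat_expectation :: "'a measure \<Rightarrow> ('a \<Rightarrow> real^'k^'n) \<Rightarrow> real^'k^'n" where
  "mat_expectation M F = (\<chi> i j. integral\<^sup>L M (\<lambda>w. F w $ i $ j))"

definition gen_sigma :: "'a measure \<Rightarrow> ('a \<Rightarrow> 'b::topological_space) \<Rightarrow> 'a measure" where
  "gen_sigma M y = vimage_algebra (space M) y borel"

definition vec_cond_exp :: "'a measure \<Rightarrow> ('a \<Rightarrow> 'b::topological_space) \<Rightarrow> ('a \<Rightarrow> real^'n) \<Rightarrow> 'a \<Rightarrow> real^'n" where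
  "vec_cond_exp M y f w = (\<chi> i. real_cond_exp M (gen_sigma M y) (\<lambda>v. f v $ i) w)"

definition bce_objective ::
  "'a measure \<Rightarrow> real \<Rightarrow> ('a \<Rightarrow> real^'d) \<Rightarrow> ('a \<Rightarrow> real^'m) \<Rightarrow> real^'m^'d \<Rightarrow> real" where
  "bce_objective M lam y x A =
     integral\<^sup>L M (\<lambda>w. (norm (A *v x w - y w))\<^sup>2)
     + lam * integral\<^sup>L M (\<lambda>w. (norm (vec_cond_exp M y (\<lambda>v. A *v x v - y v) w))\<^sup>2)"

end

theory Submission
  imports Defs
begin

(* Since the noise is centred and independent of y, E[x | y] = H y almost surely, so the bias term
   of the objective is lam E||A H y - y||^2.  With Sy = E[y y^T] and Sn = E[n n^T] the objective is
   then the quadratic function tr (A N A^T) - 2 tr (A S^T) + const of A, where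
   N = (lam + 1) H Sy H^T + Sn and S = (lam + 1) Sy H^T.  As N is symmetric positive semidefinite,
   its minimisers are exactly the solutions of the normal equation A N = S, which after division by
   lam + 1 is the first formula; the push-through identity
   Sy H^T (H Sy H^T + c Sn)^-1 = (H^T Sn^-1 H + c Sy^-1)^-1 H^T Sn^-1 with c = 1 / (lam + 1)
   turns it into the second. *)

lemma matrix_inv_right: "invertible A \<Longrightarrow> A ** matrix_inv A = mat 1"
  and matrix_inv_left: "invertible A \<Longrightarrow> matrix_inv A ** A = mat 1"
  unfolding invertible_def matrix_inv_def by (metis (mono_tags, lifting) someI)+

lemma matrix_mul_eq_iff_eq_mul_inv:
  fixes N :: "'a::semiring_1^'m^'m"
  assumes "invertible N"
  shows "A ** N = S \<longleftrightarrow> A = S ** matrix_inv N"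
  by (metis assms matrix_inv_left matrix_inv_right matrix_mul_assoc matrix_mul_rid)

lemma matrix_add_rdistrib: "(A + B) ** C = A ** C + B ** (C :: 'a::semiring_1^_^_)"
  by (simp add: matrix_matrix_mult_def vec_eq_iff sum.distrib distrib_right)

lemma transpose_add: "transpose (A + B) = transpose A + transpose (B :: 'a::semiring_1^'n^'m)"
  by (simp add: transpose_def vec_eq_iff)

lemma push_through_identity:
  fixes H :: "real^'d^'m" and P :: "real^'d^'d" and Q :: "real^'m^'m"
  assumes P: "invertible P" and Q: "invertible Q"
    and G: "invertible (H ** P ** transpose H + c *\<^sub>R Q)"
    and K: "invertible (transpose H ** matrix_inv Q ** H + c *\<^sub>R matrix_inv P)"
  shows "P ** transpose H ** matrix_inv (H ** P ** transpose H + c *\<^sub>R Q)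
       = matrix_inv (transpose H ** matrix_inv Q ** H + c *\<^sub>R matrix_inv P) ** transpose H ** matrix_inv Q"
proof -
  let ?G = "H ** P ** transpose H + c *\<^sub>R Q" and ?K = "transpose H ** matrix_inv Q ** H + c *\<^sub>R matrix_inv P"
  have "?K ** (P ** transpose H) = transpose H ** matrix_inv Q ** ?G"
    by (simp add: matrix_add_rdistrib matrix_add_ldistrib matrix_scalar_ac scalar_matrix_assoc[symmetric]
        matrix_mul_assoc matrix_inv_left[OF P] matrix_inv_left[OF Q])
       (simp add: matrix_mul_assoc[symmetric] matrix_inv_left[OF Q])
  then have "P ** transpose H = matrix_inv ?K ** transpose H ** matrix_inv Q ** ?G"
    by (metis K matrix_inv_left matrix_mul_assoc matrix_mul_lid)
  then show ?thesis
    using matrix_mul_eq_iff_eq_mul_inv[OF G] by metis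
qed

lemma inner_matrix_mul_right:
  fixes A :: "real^'k^'n" and D :: "real^'m^'n" and N :: "real^'k^'m"
  shows "inner A (D ** N) = inner D (A ** transpose N)"
  by (simp add: inner_vec_def matrix_matrix_mult_def transpose_def sum_distrib_left mult_ac sum.swap[of _ "UNIV::'k set"])

lemma inner_matrix_vector_mult_outer: "inner (A *v v) e = inner A (outer e v)"
  by (simp add: inner_vec_def matrix_vector_mult_def outer_def sum_distrib_left sum_distrib_right mult_ac)

lemma nonneg_quadratic_imp_linear_coeff_zero:
  fixes g q :: real
  assumes "q \<ge> 0" "g \<ge> 0" and nonneg: "\<And>s. 0 \<le> 2 * s * g + s\<^sup>2 * q"
  shows "g = 0"
proof (rule ccontr)
  assume "g \<noteq> 0"
  define s where "s = - g / (q + 1)"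
  have "s < 0" using assms \<open>g \<noteq> 0\<close> by (simp add: s_def divide_pos_pos)
  have "s * q = - g - s" using assms(1) by (simp add: s_def field_simps)
  have "2 * s * g + s\<^sup>2 * q = s * (2 * g + s * q)" by (simp add: power2_eq_square algebra_simps)
  also have "\<dots> = s * (g - s)" using \<open>s * q = - g - s\<close> by simp
  finally have "2 * s * g + s\<^sup>2 * q = s * (g - s)" .
  moreover have "s * (g - s) < 0" using \<open>s < 0\<close> assms(2) by (simp add: mult_neg_pos)
  ultimately show False using nonneg[of s] by simp
qed

(* On matrices, inner is the Frobenius product: f B = tr (B N B^T) - 2 tr (B S^T) + c. *)
lemma quadratic_minimizer_iff:
  fixes N :: "real^'m^'m" and S :: "real^'m^'d" and f :: "real^'m^'d \<Rightarrow> real"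
  assumes f: "\<And>B. f B = inner B (B ** N) - 2 * inner B S + c"
    and sym: "transpose N = N" and psd: "\<And>D::real^'m^'d. 0 \<le> inner D (D ** N)"
  shows "(\<forall>B. f A \<le> f B) \<longleftrightarrow> A ** N = S"
proof -
  have expand: "f (A + D) = f A + 2 * inner D (A ** N - S) + inner D (D ** N)" for D
    using inner_matrix_mul_right[of A D N]
    by (simp add: f sym matrix_add_ldistrib matrix_add_rdistrib inner_add_left inner_add_right
        inner_diff_right inner_commute[of A] algebra_simps)
  show ?thesis
  proof
    assume min: "\<forall>B. f A \<le> f B"
    define G where "G = A ** N - S"
    define g q where "g = inner G G" and "q = inner G (G ** N)"
    have "q \<ge> 0" "g \<ge> 0" using psd[of G] by (simp_all add: q_def g_def)
    have "f (A + s *\<^sub>R G) = f A + 2 * s * g + s\<^sup>2 * q" for s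
      using expand[of "s *\<^sub>R G"] unfolding G_def[symmetric] g_def q_def
      by (simp add: scalar_matrix_assoc[symmetric] power2_eq_square)
    then have "0 \<le> 2 * s * g + s\<^sup>2 * q" for s
      using min by (metis le_add_same_cancel1 add.assoc)
    then have "g = 0"
      using nonneg_quadratic_imp_linear_coeff_zero \<open>q \<ge> 0\<close> \<open>g \<ge> 0\<close> by blast
    then show "A ** N = S" by (simp add: g_def G_def)
  next
    assume "A ** N = S"
    then have "f A \<le> f (A + D)" for D using expand[of D] psd[of D] by simp
    then show "\<forall>B. f A \<le> f B" by (metis add.commute diff_add_cancel)
  qed
qed

definition square_integrable :: "'a measure \<Rightarrow> ('a \<Rightarrow> 'b::real_normed_vector) \<Rightarrow> bool" where
  "square_integrable M u \<longleftrightarrow> u \<in> borel_measurable M \<and> integrable M (\<lambda>w. (norm (u w))\<^sup>2)"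

lemma borel_measurable_vec_nth [measurable (raw)]:
  fixes f :: "'a \<Rightarrow> real^'n"
  assumes "f \<in> borel_measurable M"
  shows "(\<lambda>w. f w $ i) \<in> borel_measurable M"
  using measurable_compose[OF assms borel_measurable_nth] .

lemma borel_measurable_matrix_vector_mult [measurable]:
  fixes K :: "real^'n^'m"
  assumes "f \<in> borel_measurable M"
  shows "(\<lambda>w. K *v f w) \<in> borel_measurable M"
  using measurable_compose[OF assms borel_measurable_continuous_onI
      [OF linear_continuous_on[OF matrix_vector_mul_bounded_linear]]] .

lemma square_integrable_add:
  fixes u v :: "'a \<Rightarrow> 'b::{real_normed_vector, second_countable_topology}"
  assumes "square_integrable M u" "square_integrable M v"
  shows "square_integrable M (\<lambda>w. u w + v w)"
proof -
  have [measurable]: "u \<in> borel_measurable M" "v \<in> borel_measurable M"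
    using assms by (simp_all add: square_integrable_def)
  have bound: "(norm (u w + v w))\<^sup>2 \<le> 2 * (norm (u w))\<^sup>2 + 2 * (norm (v w))\<^sup>2" for w
  proof -
    have "(norm (u w + v w))\<^sup>2 \<le> (norm (u w) + norm (v w))\<^sup>2"
      by (simp add: norm_triangle_ineq power_mono)
    also have "\<dots> \<le> 2 * (norm (u w))\<^sup>2 + 2 * (norm (v w))\<^sup>2"
      using sum_squares_bound[of "norm (u w)" "norm (v w)"] by (simp add: power2_sum)
    finally show ?thesis .
  qed
  have "integrable M (\<lambda>w. 2 * (norm (u w))\<^sup>2 + 2 * (norm (v w))\<^sup>2)"
    using assms by (simp add: square_integrable_def)
  then have "integrable M (\<lambda>w. (norm (u w + v w))\<^sup>2)"
    by (rule Bochner_Integration.integrable_bound) (measurable, simp add: bound)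
  then show ?thesis by (simp add: square_integrable_def)
qed

lemma square_integrable_matrix_vector_mult:
  fixes K :: "real^'n^'m"
  assumes "square_integrable M u"
  shows "square_integrable M (\<lambda>w. K *v u w)"
proof -
  have [measurable]: "u \<in> borel_measurable M" using assms by (simp add: square_integrable_def)
  have bound: "(norm (K *v u w))\<^sup>2 \<le> (onorm ((*v) K))\<^sup>2 * (norm (u w))\<^sup>2" for w
    using onorm[OF matrix_vector_mul_bounded_linear, of K "u w"]
    by (simp add: power_mono flip: power_mult_distrib)
  have "integrable M (\<lambda>w. (onorm ((*v) K))\<^sup>2 * (norm (u w))\<^sup>2)"
    using assms by (simp add: square_integrable_def)
  then have "integrable M (\<lambda>w. (norm (K *v u w))\<^sup>2)"
    by (rule Bochner_Integration.integrable_bound) (measurable, simp add: bound)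
  then show ?thesis by (simp add: square_integrable_def)
qed

lemma square_integrable_integrable_nth_mult:
  fixes u :: "'a \<Rightarrow> real^'n" and v :: "'a \<Rightarrow> real^'k"
  assumes "square_integrable M u" "square_integrable M v"
  shows "integrable M (\<lambda>w. u w $ i * v w $ j)"
proof -
  have [measurable]: "u \<in> borel_measurable M" "v \<in> borel_measurable M"
    using assms by (simp_all add: square_integrable_def)
  have bound: "\<bar>u w $ i * v w $ j\<bar> \<le> (norm (u w))\<^sup>2 + (norm (v w))\<^sup>2" for w
  proof -
    have "\<bar>u w $ i * v w $ j\<bar> \<le> norm (u w) * norm (v w)"
      unfolding abs_mult by (intro mult_mono component_le_norm_cart) auto
    also have "\<dots> \<le> (norm (u w))\<^sup>2 + (norm (v w))\<^sup>2"
      using sum_squares_bound[of "norm (u w)" "norm (v w)"]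
        mult_nonneg_nonneg[OF norm_ge_zero norm_ge_zero, of "u w" "v w"] by linarith
    finally show ?thesis .
  qed
  have "integrable M (\<lambda>w. (norm (u w))\<^sup>2 + (norm (v w))\<^sup>2)"
    using assms by (simp add: square_integrable_def)
  then show ?thesis
    by (rule Bochner_Integration.integrable_bound) (measurable, simp add: bound)
qed

lemma (in finite_measure) square_integrable_integrable_nth:
  fixes u :: "'a \<Rightarrow> real^'n"
  assumes "square_integrable M u"
  shows "integrable M (\<lambda>w. u w $ i)"
proof (rule square_integrable_imp_integrable)
  show "(\<lambda>w. u w $ i) \<in> borel_measurable M"
    using assms by (simp add: square_integrable_def borel_measurable_vec_nth)
  show "integrable M (\<lambda>w. (u w $ i)\<^sup>2)"
    using square_integrable_integrable_nth_mult[OF assms assms, of i i] by (simp add: power2_eq_square)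
qed

abbreviation cross_moment :: "'a measure \<Rightarrow> ('a \<Rightarrow> real^'n) \<Rightarrow> ('a \<Rightarrow> real^'k) \<Rightarrow> real^'k^'n" where
  "cross_moment M u v \<equiv> mat_expectation M (\<lambda>w. outer (u w) (v w))"

lemma cross_moment_nth [simp]: "cross_moment M u v $ i $ j = (\<integral>w. u w $ i * v w $ j \<partial>M)"
  by (simp add: mat_expectation_def outer_def)

lemma transpose_cross_moment: "transpose (cross_moment M u v) = cross_moment M v u"
  by (simp add: vec_eq_iff transpose_def mult.commute)

lemma
  assumes "square_integrable M u" "square_integrable M v"
  shows integrable_inner_outer: "integrable M (\<lambda>w. inner A (outer (u w) (v w)))"
    and integral_inner_outer: "(\<integral>w. inner A (outer (u w) (v w)) \<partial>M) = inner A (cross_moment M u v)"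
  using square_integrable_integrable_nth_mult[OF assms]
  by (simp_all add: inner_vec_def outer_def mat_expectation_def)

lemma cross_moment_matrix_vector_mult_left:
  assumes "square_integrable M u" "square_integrable M v"
  shows "cross_moment M (\<lambda>w. K *v u w) v = K ** cross_moment M u v"
  using square_integrable_integrable_nth_mult[OF assms]
  by (simp add: vec_eq_iff matrix_matrix_mult_def matrix_vector_mult_def sum_distrib_right mult.assoc)

lemma cross_moment_matrix_vector_mult_right:
  assumes "square_integrable M u" "square_integrable M v"
  shows "cross_moment M u (\<lambda>w. K *v v w) = cross_moment M u v ** transpose K"
  using arg_cong[OF cross_moment_matrix_vector_mult_left[OF assms(2,1), of K], of transpose]
  by (simp add: transpose_cross_moment matrix_transpose_mul)

lemma cross_moment_add_left:
  assumes "square_integrable M u" "square_integrable M u'" "square_integrable M v"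
  shows "cross_moment M (\<lambda>w. u w + u' w) v = cross_moment M u v + cross_moment M u' v"
  using square_integrable_integrable_nth_mult[OF assms(1,3)] square_integrable_integrable_nth_mult[OF assms(2,3)]
  by (simp add: vec_eq_iff distrib_right)

lemma cross_moment_add_right:
  assumes "square_integrable M u" "square_integrable M v" "square_integrable M v'"
  shows "cross_moment M u (\<lambda>w. v w + v' w) = cross_moment M u v + cross_moment M u v'"
  using square_integrable_integrable_nth_mult[OF assms(1,2)] square_integrable_integrable_nth_mult[OF assms(1,3)]
  by (simp add: vec_eq_iff distrib_left)

lemma cross_moment_cong_AE:
  assumes [measurable]: "u \<in> borel_measurable M" "u' \<in> borel_measurable M"
    "v \<in> borel_measurable M" "v' \<in> borel_measurable M"
    and "AE w in M. u w = u' w" "AE w in M. v w = v' w"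
  shows "cross_moment M u v = cross_moment M u' v'"
proof -
  have ae: "AE w in M. u w $ i * v w $ j = u' w $ i * v' w $ j" for i j
    using assms(5,6) by eventually_elim simp
  have "(\<integral>w. u w $ i * v w $ j \<partial>M) = (\<integral>w. u' w $ i * v' w $ j \<partial>M)" for i j
    using ae by (rule integral_cong_AE[rotated 2]) simp_all
  then show ?thesis by (simp add: vec_eq_iff)
qed

lemma inner_cross_moment_nonneg:
  assumes "square_integrable M u"
  shows "0 \<le> inner D (D ** cross_moment M u u)"
proof -
  have "inner D (D ** cross_moment M u u) = inner D (cross_moment M (\<lambda>w. D *v u w) u)"
    by (simp add: cross_moment_matrix_vector_mult_left[OF assms assms])
  also have "\<dots> = (\<integral>w. inner (D *v u w) (D *v u w) \<partial>M)"
    by (simp add: integral_inner_outer[OF square_integrable_matrix_vector_mult[OF assms] assms]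
        inner_matrix_vector_mult_outer)
  finally show ?thesis by simp
qed

lemma integral_norm_sq_linear_residual:
  assumes "square_integrable M u" "square_integrable M v"
  shows "(\<integral>w. (norm (A *v u w - v w))\<^sup>2 \<partial>M)
       = inner A (A ** cross_moment M u u) - 2 * inner A (cross_moment M v u) + (\<integral>w. (norm (v w))\<^sup>2 \<partial>M)"
proof -
  have Au: "square_integrable M (\<lambda>w. A *v u w)"
    using assms(1) by (rule square_integrable_matrix_vector_mult)
  have "(norm (A *v u w - v w))\<^sup>2
      = inner A (outer (A *v u w) (u w)) - 2 * inner A (outer (v w) (u w)) + (norm (v w))\<^sup>2" for w
  proof -
    have "(norm (A *v u w - v w))\<^sup>2
        = inner (A *v u w) (A *v u w) - 2 * inner (A *v u w) (v w) + (norm (v w))\<^sup>2"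
      by (simp add: power2_norm_eq_inner inner_diff_left inner_diff_right inner_commute[of "v w" "A *v u w"])
    then show ?thesis by (simp only: inner_matrix_vector_mult_outer)
  qed
  then show ?thesis
    using assms Au integrable_inner_outer[OF Au assms(1)] integrable_inner_outer[OF assms(2,1)]
    by (simp add: integral_inner_outer cross_moment_matrix_vector_mult_left square_integrable_def)
qed

lemma subalgebra_gen_sigma:
  assumes "y \<in> borel_measurable M"
  shows "subalgebra M (gen_sigma M y)"
  unfolding subalgebra_def gen_sigma_def using sets_image_in_sets[OF _ assms] by auto

lemma borel_measurable_gen_sigma_comp:
  assumes "g \<in> borel_measurable borel"
  shows "(\<lambda>w. g (y w)) \<in> borel_measurable (gen_sigma M y)"
proof -
  have "y \<in> measurable (gen_sigma M y) borel"
    unfolding gen_sigma_def by (rule measurable_vimage_algebra1) auto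
  then show ?thesis using assms by (rule measurable_compose)
qed

lemma (in prob_space) indep_set_integral_mult:
  fixes X Y :: "'a \<Rightarrow> real"
  assumes indep: "indep_set (sets F) (sets G)"
    and F: "subalgebra M F" and G: "subalgebra M G"
    and X: "X \<in> borel_measurable F" and Y: "Y \<in> borel_measurable G"
    and "integrable M X" "integrable M Y"
  shows "(\<integral>w. X w * Y w \<partial>M) = (\<integral>w. X w \<partial>M) * (\<integral>w. Y w \<partial>M)"
proof -
  have generated: "sigma_sets (space M) {Z -` A \<inter> space M | A. A \<in> sets borel} \<subseteq> sets S"
    if S: "subalgebra M S" and Z: "Z \<in> borel_measurable S" for S and Z :: "'a \<Rightarrow> real"
  proof -
    have "space S = space M" using S by (simp add: subalgebra_def)
    have "sigma_sets (space S) {Z -` A \<inter> space M | A. A \<in> sets borel} \<subseteq> sets S"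
      using measurable_sets[OF Z] \<open>space S = space M\<close> by (intro sets.sigma_sets_subset) auto
    then show ?thesis using \<open>space S = space M\<close> by simp
  qed
  have "indep_var borel X borel Y"
    unfolding indep_var_eq
    using measurable_from_subalg[OF F X] measurable_from_subalg[OF G Y]
      indep generated[OF F X] generated[OF G Y]
    unfolding indep_sets2_eq by blast
  then show ?thesis using assms(6,7) by (rule indep_var_lebesgue_integral)
qed

lemma (in prob_space) real_cond_exp_indep:
  assumes indep: "indep_set (sets F) (sets G)"
    and F: "subalgebra M F" and G: "subalgebra M G"
    and h: "h \<in> borel_measurable G" "integrable M h"
  shows "AE w in M. real_cond_exp M F h w = (\<integral>v. h v \<partial>M)"
proof -
  interpret F: finite_measure_subalgebra M F
    using F by unfold_locales (simp_all add: subalgebra_def)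
  show ?thesis
  proof (rule F.real_cond_exp_charact)
    fix A assume A: "A \<in> sets F"
    then have "A \<in> events" using F by (auto simp: subalgebra_def)
    have "integrable M (indicator A :: 'a \<Rightarrow> real)"
      by (rule integrable_real_indicator[OF \<open>A \<in> events\<close>]) (simp add: less_top[symmetric])
    have "(\<integral>w\<in>A. h w \<partial>M) = (\<integral>w. indicator A w * h w \<partial>M)"
      by (simp add: set_lebesgue_integral_def)
    also have "\<dots> = prob A * (\<integral>v. h v \<partial>M)"
      using indep_set_integral_mult[OF indep F G _ h(1) _ h(2), of "indicator A"] A
        \<open>integrable M (indicator A)\<close> \<open>A \<in> events\<close>
      by (simp add: Int_absorb2)
    also have "\<dots> = (\<integral>w\<in>A. (\<integral>v. h v \<partial>M) \<partial>M)"
      using \<open>A \<in> events\<close> by (simp add: set_lebesgue_integral_def)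
    finally show "(\<integral>w\<in>A. h w \<partial>M) = (\<integral>w\<in>A. (\<integral>v. h v \<partial>M) \<partial>M)" .
  qed (use h in auto)
qed

lemma borel_measurable_vec_cond_exp [measurable]:
  "(vec_cond_exp M y f :: 'a \<Rightarrow> real^'n) \<in> borel_measurable M"
proof -
  have "(\<lambda>w. vec_cond_exp M y f w $ i) \<in> borel_measurable M" for i
    by (simp add: vec_cond_exp_def)
  then show ?thesis
    by (auto simp: borel_measurable_euclidean_space[where 'c="real^'n"] Basis_vec_def
        cart_eq_inner_axis[symmetric])
qed

lemma (in prob_space) vec_cond_exp_add_indep:
  fixes g :: "'b::topological_space \<Rightarrow> real^'k" and h :: "'c::topological_space \<Rightarrow> real^'k"
  assumes indep: "indep_set (sets (gen_sigma M y)) (sets (gen_sigma M n))"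
    and y: "y \<in> borel_measurable M" and n: "n \<in> borel_measurable M"
    and [measurable]: "g \<in> borel_measurable borel" "h \<in> borel_measurable borel"
    and int_g: "\<And>i. integrable M (\<lambda>w. g (y w) $ i)"
    and int_h: "\<And>i. integrable M (\<lambda>w. h (n w) $ i)"
    and mean_h: "\<And>i. (\<integral>w. h (n w) $ i \<partial>M) = 0"
  shows "AE w in M. vec_cond_exp M y (\<lambda>w. g (y w) + h (n w)) w = g (y w)"
proof -
  interpret F: finite_measure_subalgebra M "gen_sigma M y"
    using subalgebra_gen_sigma[OF y] by unfold_locales (simp_all add: subalgebra_def)
  have "AE w in M. real_cond_exp M (gen_sigma M y) (\<lambda>v. g (y v) $ i + h (n v) $ i) w = g (y w) $ i"
    for i
  proof -
    have "(\<lambda>w. g (y w) $ i) \<in> borel_measurable (gen_sigma M y)"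
      "(\<lambda>w. h (n w) $ i) \<in> borel_measurable (gen_sigma M n)"
      by (intro borel_measurable_gen_sigma_comp; measurable)+
    then have "AE w in M. real_cond_exp M (gen_sigma M y) (\<lambda>v. g (y v) $ i) w = g (y w) $ i"
      "AE w in M. real_cond_exp M (gen_sigma M y) (\<lambda>v. h (n v) $ i) w = 0"
      using F.real_cond_exp_F_meas[OF int_g] real_cond_exp_indep[OF indep subalgebra_gen_sigma[OF y]
          subalgebra_gen_sigma[OF n] _ int_h] mean_h
      by simp_all
    moreover have "AE w in M. real_cond_exp M (gen_sigma M y) (\<lambda>v. g (y v) $ i + h (n v) $ i) w
        = real_cond_exp M (gen_sigma M y) (\<lambda>v. g (y v) $ i) w
          + real_cond_exp M (gen_sigma M y) (\<lambda>v. h (n v) $ i) w"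
      using int_g int_h by (rule F.real_cond_exp_add)
    ultimately show ?thesis by eventually_elim simp
  qed
  then have "AE w in M. \<forall>i\<in>UNIV. real_cond_exp M (gen_sigma M y) (\<lambda>v. g (y v) $ i + h (n v) $ i) w
      = g (y w) $ i"
    by (intro AE_finite_allI) simp_all
  then show ?thesis by eventually_elim (simp add: vec_cond_exp_def vec_eq_iff)
qed

locale additive_noise_model = prob_space M
  for M :: "'a measure" and H :: "real^'d^'m" and y :: "'a \<Rightarrow> real^'d" and n :: "'a \<Rightarrow> real^'m" +
  assumes measurable_signal [measurable]: "y \<in> borel_measurable M"
    and measurable_noise [measurable]: "n \<in> borel_measurable M"
    and indep_signal_noise: "indep_set (sets (gen_sigma M y)) (sets (gen_sigma M n))"
    and integrable_signal_sq: "integrable M (\<lambda>w. (norm (y w))\<^sup>2)"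
    and integrable_noise_sq: "integrable M (\<lambda>w. (norm (n w))\<^sup>2)"
    and noise_mean_zero: "\<And>i. (\<integral>w. n w $ i \<partial>M) = 0"
begin

abbreviation observation :: "'a \<Rightarrow> real^'m" where
  "observation \<equiv> \<lambda>w. H *v y w + n w"

lemma square_integrable_signal: "square_integrable M y"
  using integrable_signal_sq by (simp add: square_integrable_def)

lemma square_integrable_noise: "square_integrable M n"
  using integrable_noise_sq by (simp add: square_integrable_def)

lemma square_integrable_noiseless: "square_integrable M (\<lambda>w. H *v y w)"
  using square_integrable_signal by (rule square_integrable_matrix_vector_mult)

lemma square_integrable_observation: "square_integrable M observation"
  using square_integrable_noiseless square_integrable_noise by (rule square_integrable_add)

lemma cross_moment_signal_noise: "cross_moment M y n = 0"
proof -
  have "(\<integral>w. y w $ i * n w $ j \<partial>M) = (\<integral>w. y w $ i \<partial>M) * (\<integral>w. n w $ j \<partial>M)" for i j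
  proof (rule indep_set_integral_mult[OF indep_signal_noise subalgebra_gen_sigma subalgebra_gen_sigma])
    show "(\<lambda>w. y w $ i) \<in> borel_measurable (gen_sigma M y)"
      "(\<lambda>w. n w $ j) \<in> borel_measurable (gen_sigma M n)"
      by (intro borel_measurable_gen_sigma_comp borel_measurable_nth)+
  qed (simp_all add: square_integrable_integrable_nth square_integrable_signal square_integrable_noise)
  then show ?thesis by (simp add: vec_eq_iff noise_mean_zero)
qed

lemma cross_moment_noise_signal: "cross_moment M n y = 0"
  using cross_moment_signal_noise by (simp add: vec_eq_iff mult.commute)

lemma cross_moment_noiseless: "cross_moment M (\<lambda>w. H *v y w) (\<lambda>w. H *v y w) = H ** cross_moment M y y ** transpose H"
  using square_integrable_signal square_integrable_noiseless
  by (simp add: cross_moment_matrix_vector_mult_left cross_moment_matrix_vector_mult_right matrix_mul_assoc)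

lemma cross_moment_signal_observation:
  "cross_moment M y observation = cross_moment M y y ** transpose H"
  using square_integrable_signal square_integrable_noiseless square_integrable_noise
  by (simp add: cross_moment_add_right cross_moment_matrix_vector_mult_right cross_moment_signal_noise)

lemma cross_moment_observation:
  "cross_moment M observation observation = H ** cross_moment M y y ** transpose H + cross_moment M n n"
  using square_integrable_signal square_integrable_noiseless square_integrable_noise square_integrable_observation
  by (simp add: cross_moment_add_left cross_moment_add_right cross_moment_noiseless
      cross_moment_matrix_vector_mult_left cross_moment_matrix_vector_mult_right
      cross_moment_signal_noise cross_moment_noise_signal)

lemma cond_exp_linear_residual:
  "AE w in M. vec_cond_exp M y (\<lambda>v. A *v observation v - B *v y v) w = A *v (H *v y w) - B *v y w"
proof -
  have split: "(\<lambda>v. A *v observation v - B *v y v) = (\<lambda>v. (A ** H - B) *v y v + A *v n v)"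
    by (simp add: fun_eq_iff matrix_vector_right_distrib matrix_vector_mult_diff_rdistrib
        matrix_vector_mul_assoc)
  have "(\<integral>w. (A *v n w) $ i \<partial>M) = 0" for i
    using square_integrable_integrable_nth[OF square_integrable_noise]
    by (simp add: matrix_vector_mult_def noise_mean_zero)
  then have "AE w in M. vec_cond_exp M y (\<lambda>v. (A ** H - B) *v y v + A *v n v) w = (A ** H - B) *v y w"
    using square_integrable_integrable_nth[OF square_integrable_matrix_vector_mult[OF square_integrable_signal]]
      square_integrable_integrable_nth[OF square_integrable_matrix_vector_mult[OF square_integrable_noise]]
    by (intro vec_cond_exp_add_indep[OF indep_signal_noise measurable_signal measurable_noise,
          where g = "\<lambda>v. (A ** H - B) *v v" and h = "\<lambda>v. A *v v"]) auto
  then show ?thesis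
    unfolding split by (simp add: matrix_vector_mult_diff_rdistrib matrix_vector_mul_assoc)
qed

lemma cond_exp_observation: "AE w in M. vec_cond_exp M y observation w = H *v y w"
  using cond_exp_linear_residual[of "mat 1" 0] by simp

lemma cross_moment_cond_exp_observation:
  "cross_moment M (vec_cond_exp M y observation) (vec_cond_exp M y observation)
     = H ** cross_moment M y y ** transpose H"
  using cross_moment_cong_AE[OF _ _ _ _ cond_exp_observation cond_exp_observation] cross_moment_noiseless
  by simp

lemma bce_objective_eq:
  "bce_objective M lam y observation A
     = (\<integral>w. (norm (A *v observation w - y w))\<^sup>2 \<partial>M) + lam * (\<integral>w. (norm (A *v (H *v y w) - y w))\<^sup>2 \<partial>M)"
proof -
  have "(\<integral>w. (norm (vec_cond_exp M y (\<lambda>v. A *v observation v - y v) w))\<^sup>2 \<partial>M)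
      = (\<integral>w. (norm (A *v (H *v y w) - y w))\<^sup>2 \<partial>M)"
    using cond_exp_linear_residual[of A "mat 1"]
    by (intro integral_cong_AE) (auto elim!: eventually_mono)
  then show ?thesis by (simp add: bce_objective_def)
qed

lemma bce_objective_quadratic:
  "bce_objective M lam y observation A
     = inner A (A ** ((lam + 1) *\<^sub>R (H ** cross_moment M y y ** transpose H) + cross_moment M n n))
       - 2 * inner A ((lam + 1) *\<^sub>R (cross_moment M y y ** transpose H))
       + (lam + 1) * (\<integral>w. (norm (y w))\<^sup>2 \<partial>M)"
proof -
  have observed: "(\<integral>w. (norm (A *v observation w - y w))\<^sup>2 \<partial>M)
      = inner A (A ** (H ** cross_moment M y y ** transpose H + cross_moment M n n))
        - 2 * inner A (cross_moment M y y ** transpose H) + (\<integral>w. (norm (y w))\<^sup>2 \<partial>M)"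
    using integral_norm_sq_linear_residual[OF square_integrable_observation square_integrable_signal]
    by (simp add: cross_moment_observation cross_moment_signal_observation)
  have noiseless: "(\<integral>w. (norm (A *v (H *v y w) - y w))\<^sup>2 \<partial>M)
      = inner A (A ** (H ** cross_moment M y y ** transpose H))
        - 2 * inner A (cross_moment M y y ** transpose H) + (\<integral>w. (norm (y w))\<^sup>2 \<partial>M)"
    using integral_norm_sq_linear_residual[OF square_integrable_noiseless square_integrable_signal]
    by (simp add: cross_moment_noiseless cross_moment_matrix_vector_mult_right square_integrable_signal)
  show ?thesis
    unfolding bce_objective_eq observed noiseless
    by (simp add: matrix_add_ldistrib matrix_scalar_ac scalar_matrix_assoc[symmetric]
        inner_add_right algebra_simps)
qed

lemma bce_minimizer_iff:
  assumes "lam \<ge> 0"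
  shows "(\<forall>B. bce_objective M lam y observation A \<le> bce_objective M lam y observation B)
     \<longleftrightarrow> A ** (H ** cross_moment M y y ** transpose H + (1 / (lam + 1)) *\<^sub>R cross_moment M n n)
        = cross_moment M y y ** transpose H"
proof -
  let ?N = "(lam + 1) *\<^sub>R (H ** cross_moment M y y ** transpose H) + cross_moment M n n"
  have sym: "transpose ?N = ?N"
    by (simp add: transpose_add transpose_scalar matrix_transpose_mul transpose_cross_moment matrix_mul_assoc)
  have psd: "0 \<le> inner D (D ** ?N)" for D :: "real^'m^'d"
    using inner_cross_moment_nonneg[OF square_integrable_noiseless, of D]
      inner_cross_moment_nonneg[OF square_integrable_noise, of D] assms
    by (simp add: cross_moment_noiseless matrix_add_ldistrib matrix_scalar_ac
        scalar_matrix_assoc[symmetric] inner_add_right)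
  have "(\<forall>B. bce_objective M lam y observation A \<le> bce_objective M lam y observation B)
      \<longleftrightarrow> A ** ?N = (lam + 1) *\<^sub>R (cross_moment M y y ** transpose H)"
    by (rule quadratic_minimizer_iff[OF bce_objective_quadratic sym psd])
  also have "?N = (lam + 1) *\<^sub>R (H ** cross_moment M y y ** transpose H + (1 / (lam + 1)) *\<^sub>R cross_moment M n n)"
    using assms by (simp add: scaleR_add_right)
  finally show ?thesis
    using assms by (simp add: matrix_scalar_ac scalar_matrix_assoc[symmetric])
qed

lemma regularized_observation_moment_eq:
  assumes "lam \<ge> 0"
  shows "(1 / (lam + 1)) *\<^sub>R cross_moment M observation observation
       + (lam / (lam + 1)) *\<^sub>R cross_moment M (vec_cond_exp M y observation) (vec_cond_exp M y observation)
     = H ** cross_moment M y y ** transpose H + (1 / (lam + 1)) *\<^sub>R cross_moment M n n"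
proof -
  have "1 / (lam + 1) + lam / (lam + 1) = 1"
    using assms by (simp add: add_divide_distrib[symmetric])
  then show ?thesis
    by (simp add: cross_moment_observation cross_moment_cond_exp_observation scaleR_add_right
        flip: scaleR_add_left)
qed

end

theorem theorem2:
  fixes M :: "'a measure" and H :: "real^'d^'m"
    and y :: "'a \<Rightarrow> real^'d" and n :: "'a \<Rightarrow> real^'m" and lam :: real
  assumes "prob_space M"
    and "y \<in> borel_measurable M" and "n \<in> borel_measurable M"
    and "prob_space.indep_set M (sets (gen_sigma M y)) (sets (gen_sigma M n))"
    and "integrable M (\<lambda>w. (norm (y w))\<^sup>2)"
    and "integrable M (\<lambda>w. (norm (n w))\<^sup>2)"
    and "\<forall>i. integral\<^sup>L M (\<lambda>w. n w $ i) = 0"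
    and "lam \<ge> 0"
    and "invertible (mat_expectation M (\<lambda>w. outer (n w) (n w)))"
    and "invertible (mat_expectation M (\<lambda>w. outer (y w) (y w)))"
    and "invertible ((1 / (lam + 1)) *\<^sub>R mat_expectation M (\<lambda>w. outer (H *v y w + n w) (H *v y w + n w))
              + (lam / (lam + 1)) *\<^sub>R mat_expectation M (\<lambda>w.
                  outer (vec_cond_exp M y (\<lambda>v. H *v y v + n v) w) (vec_cond_exp M y (\<lambda>v. H *v y v + n v) w)))"
    and "invertible (transpose H ** matrix_inv (mat_expectation M (\<lambda>w. outer (n w) (n w))) ** H
              + (1 / (lam + 1)) *\<^sub>R matrix_inv (mat_expectation M (\<lambda>w. outer (y w) (y w))))"
  shows "(\<forall>A. (\<forall>B. bce_objective M lam y (\<lambda>w. H *v y w + n w) A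
                    \<le> bce_objective M lam y (\<lambda>w. H *v y w + n w) B)
             \<longleftrightarrow> A = mat_expectation M (\<lambda>w. outer (y w) (H *v y w + n w))
                    ** matrix_inv ((1 / (lam + 1)) *\<^sub>R mat_expectation M (\<lambda>w. outer (H *v y w + n w) (H *v y w + n w))
                       + (lam / (lam + 1)) *\<^sub>R mat_expectation M (\<lambda>w.
                          outer (vec_cond_exp M y (\<lambda>v. H *v y v + n v) w) (vec_cond_exp M y (\<lambda>v. H *v y v + n v) w))))
         \<and> mat_expectation M (\<lambda>w. outer (y w) (H *v y w + n w))
                    ** matrix_inv ((1 / (lam + 1)) *\<^sub>R mat_expectation M (\<lambda>w. outer (H *v y w + n w) (H *v y w + n w))
                       + (lam / (lam + 1)) *\<^sub>R mat_expectation M (\<lambda>w.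
                          outer (vec_cond_exp M y (\<lambda>v. H *v y v + n v) w) (vec_cond_exp M y (\<lambda>v. H *v y v + n v) w)))
           = matrix_inv (transpose H ** matrix_inv (mat_expectation M (\<lambda>w. outer (n w) (n w))) ** H
                + (1 / (lam + 1)) *\<^sub>R matrix_inv (mat_expectation M (\<lambda>w. outer (y w) (y w))))
             ** transpose H ** matrix_inv (mat_expectation M (\<lambda>w. outer (n w) (n w)))"
proof -
  interpret additive_noise_model M H y n
    using assms(1-7) by (simp add: additive_noise_model_def additive_noise_model_axioms_def)
  note weighted_moment = regularized_observation_moment_eq[OF assms(8)]
  have weighted_moment_invertible: "invertible (H ** cross_moment M y y ** transpose H + (1 / (lam + 1)) *\<^sub>R cross_moment M n n)"
    using assms(11) unfolding weighted_moment .
  have "(\<forall>B. bce_objective M lam y observation A \<le> bce_objective M lam y observation B)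
      \<longleftrightarrow> A = cross_moment M y y ** transpose H
          ** matrix_inv (H ** cross_moment M y y ** transpose H + (1 / (lam + 1)) *\<^sub>R cross_moment M n n)" for A
    using bce_minimizer_iff[OF assms(8)] matrix_mul_eq_iff_eq_mul_inv[OF weighted_moment_invertible] by simp
  then show ?thesis
    unfolding weighted_moment cross_moment_signal_observation
    using push_through_identity[OF assms(10,9) weighted_moment_invertible assms(12)] by simp
qed

end
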